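(* Let $\lambda$ be a positive integer, $k,\psi_0\in\mathbb{R}$, $F(\psi)=\frac{k}{\sin^2(\lambda\psi+\psi_0)}$ and $G(\psi)=\cos(\lambda\psi+\psi_0)$. Then for every $\nu\in\mathbb{N}$ the function $$\mathcal{X}_L^{\,\nu}\left(p_r+\frac{1}{\lambda r}\mathcal{X}_L\right)^\lambda G(\psi)$$ is a constant of motion of $H=\frac12p_r^2+\frac{1}{r^2}\left(\frac12p_\psi^2+F(\psi)\right)$.
   Context: Phase space coordinates are $(r,\psi,p_r,p_\psi)$ with $r>0$ and canonical Poisson bracket; dots denote derivatives in $\psi$. $L=\frac12p_\psi^2+F(\psi)$ and $\mathcal{X}_L=p_\psi\frac{\partial}{\partial\psi}-\dot F\frac{\partial}{\partial p_\psi}$ is its Hamiltonian vector field, viewed as a differential operator; $p_r$ and $\frac{1}{\lambda r}$ act by multiplication. A constant of motion is a function with vanishing Poisson bracket with $H$. *)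

theory Defs
  imports "HOL-Analysis.Analysis"
begin

text \<open>Phase-space functions of the coordinates (r, psi, p_r, p_psi).\<close>
type_synonym phase_fun = "real \<Rightarrow> real \<Rightarrow> real \<Rightarrow> real \<Rightarrow> real"

definition d_r :: "phase_fun \<Rightarrow> phase_fun" where
  "d_r f = (\<lambda>r psi pr ppsi. deriv (\<lambda>t. f t psi pr ppsi) r)"
definition d_psi :: "phase_fun \<Rightarrow> phase_fun" where
  "d_psi f = (\<lambda>r psi pr ppsi. deriv (\<lambda>t. f r t pr ppsi) psi)"
definition d_pr :: "phase_fun \<Rightarrow> phase_fun" where
  "d_pr f = (\<lambda>r psi pr ppsi. deriv (\<lambda>t. f r psi t ppsi) pr)"
definition d_ppsi :: "phase_fun \<Rightarrow> phase_fun" where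
  "d_ppsi f = (\<lambda>r psi pr ppsi. deriv (\<lambda>t. f r psi pr t) ppsi)"

definition poisson :: "phase_fun \<Rightarrow> phase_fun \<Rightarrow> phase_fun" where
  "poisson f g = (\<lambda>r psi pr ppsi.
     d_r f r psi pr ppsi * d_pr g r psi pr ppsi - d_pr f r psi pr ppsi * d_r g r psi pr ppsi
   + d_psi f r psi pr ppsi * d_ppsi g r psi pr ppsi - d_ppsi f r psi pr ppsi * d_psi g r psi pr ppsi)"

text \<open>Hamiltonian vector field of L = p_psi^2/2 + F(psi), as a differential operator:
  X_L = p_psi d/dpsi - F'(psi) d/dp_psi.\<close>
definition XL :: "(real \<Rightarrow> real) \<Rightarrow> phase_fun \<Rightarrow> phase_fun" where
  "XL F f = (\<lambda>r psi pr ppsi. ppsi * d_psi f r psi pr ppsi - deriv F psi * d_ppsi f r psi pr ppsi)"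

definition Aop :: "nat \<Rightarrow> (real \<Rightarrow> real) \<Rightarrow> phase_fun \<Rightarrow> phase_fun" where
  "Aop lam F f = (\<lambda>r psi pr ppsi. pr * f r psi pr ppsi + (1 / (real lam * r)) * XL F f r psi pr ppsi)"

definition Ham :: "(real \<Rightarrow> real) \<Rightarrow> phase_fun" where
  "Ham F = (\<lambda>r psi pr ppsi. pr^2 / 2 + (1 / r^2) * (ppsi^2 / 2 + F psi))"

end

theory Submission
  imports Defs
begin

(*
  Proof idea.  Write theta = lam*psi + psi0 and L = p_psi^2/2 + F(psi).  Every function
  produced by the iteration has the form

      a(r, p_r, L) * cos theta  +  b(r, p_r, L) * p_psi * sin theta          (lift (a,b))

  with a, b smooth functions of the "reduced" variables (r, p_r, L).  On such lifts
    * X_L acts as (a,b) |-> (2 lam L b, -lam a), because X_L L = 0 and, for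
      F = k / sin^2 theta, X_L (p_psi sin theta) = 2 lam L cos theta;
    * p_r + X_L/(lam r) acts as (a,b) |-> (p_r a + 2 L b / r, p_r b - a / r);
    * {f, H} = p_r f_r + (2L/r^3) f_{p_r} + (X_L f)/r^2, and on lifts the first two
      terms act componentwise as T = p_r d/dr + (2L/r^3) d/dp_r.
  So {f,H} = 0 iff T(a,b) = (lam/r^2) (-2 L b, a) ("radial eigenvalue lam").  Starting
  from G = lift (1,0) (eigenvalue 0), each application of p_r + X_L/(lam r) raises the
  eigenvalue by one, and X_L preserves it.  After lam steps the eigenvalue is lam, whence
  the bracket vanishes for every X_L^nu.
*)

(* Functions of the reduced variables (r, p_r, L) and their partial derivatives. *)
type_synonym red_fun = "real \<Rightarrow> real \<Rightarrow> real \<Rightarrow> real"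

definition Dr :: "red_fun \<Rightarrow> red_fun" where
  "Dr c = (\<lambda>r p l. deriv (\<lambda>t. c t p l) r)"
definition Dp :: "red_fun \<Rightarrow> red_fun" where
  "Dp c = (\<lambda>r p l. deriv (\<lambda>t. c r t l) p)"
definition DL :: "red_fun \<Rightarrow> red_fun" where
  "DL c = (\<lambda>r p l. deriv (\<lambda>t. c r p t) l)"

definition smooth_red :: "red_fun \<Rightarrow> bool" where
  "smooth_red c \<longleftrightarrow> (\<forall>r p l. r > 0 \<longrightarrow> (\<lambda>t. c t p l) differentiable at r
     \<and> (\<lambda>t. c r t l) differentiable at p \<and> (\<lambda>t. c r p t) differentiable at l)"

lemma smooth_redD:
  assumes "smooth_red c" "r > 0"
  shows "((\<lambda>t. c t p l) has_real_derivative Dr c r p l) (at r)"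
    and "((\<lambda>t. c r t l) has_real_derivative Dp c r p l) (at p)"
    and "((\<lambda>t. c r p t) has_real_derivative DL c r p l) (at l)"
  using assms by (auto simp: smooth_red_def Dr_def Dp_def DL_def DERIV_deriv_iff_real_differentiable)

lemma smooth_redI:
  assumes "\<And>r p l. r > 0 \<Longrightarrow> \<exists>D. ((\<lambda>t. c t p l) has_real_derivative D) (at r)"
    and "\<And>r p l. r > 0 \<Longrightarrow> \<exists>D. ((\<lambda>t. c r t l) has_real_derivative D) (at p)"
    and "\<And>r p l. r > 0 \<Longrightarrow> \<exists>D. ((\<lambda>t. c r p t) has_real_derivative D) (at l)"
  shows "smooth_red c"
  using assms unfolding smooth_red_def real_differentiable_def by blast

(* A pair (a,b) of reduced functions stands for a cos theta + b p_psi sin theta. *)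
definition smooth_pair :: "red_fun \<times> red_fun \<Rightarrow> bool" where
  "smooth_pair c \<longleftrightarrow> smooth_red (fst c) \<and> smooth_red (snd c)"

(* The reduced form of the operator p_r + X_L/(lam r). *)
definition A_red :: "red_fun \<times> red_fun \<Rightarrow> red_fun \<times> red_fun" where
  "A_red c = (\<lambda>r p l. p * fst c r p l + 2 * l * snd c r p l / r,
              \<lambda>r p l. p * snd c r p l - fst c r p l / r)"

(* The reduced form of X_L (for F = k / sin^2 theta). *)
definition X_red :: "nat \<Rightarrow> red_fun \<times> red_fun \<Rightarrow> red_fun \<times> red_fun" where
  "X_red lam c = (\<lambda>r p l. (2 * real lam * l) * snd c r p l, \<lambda>r p l. (- real lam) * fst c r p l)"

(* The pair representing G = cos theta. *)
definition unit_pair :: "red_fun \<times> red_fun" where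
  "unit_pair = (\<lambda>r p l. 1, \<lambda>r p l. 0)"

lemma smooth_pair_unit: "smooth_pair unit_pair"
  unfolding smooth_pair_def unit_pair_def by (auto intro!: smooth_redI exI derivative_eq_intros)

lemma smooth_pair_A_red:
  assumes "smooth_pair c" shows "smooth_pair (A_red c)"
proof -
  have a: "smooth_red (fst c)" and b: "smooth_red (snd c)" using assms by (auto simp: smooth_pair_def)
  show ?thesis unfolding smooth_pair_def A_red_def fst_conv snd_conv
    using smooth_redD[OF a] smooth_redD[OF b]
    by (intro conjI smooth_redI exI) (auto intro!: derivative_eq_intros)
qed

lemma smooth_pair_X_red:
  assumes "smooth_pair c" shows "smooth_pair (X_red lam c)"
proof -
  have a: "smooth_red (fst c)" and b: "smooth_red (snd c)" using assms by (auto simp: smooth_pair_def)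
  show ?thesis unfolding smooth_pair_def X_red_def fst_conv snd_conv
    using smooth_redD[OF a] smooth_redD[OF b]
    by (intro conjI smooth_redI exI) (auto intro!: derivative_eq_intros)
qed

(* The part of the Poisson bracket with H acting on the reduced variables:
   T = p_r d/dr + (2L/r^3) d/dp_r. *)
definition drift :: "red_fun \<Rightarrow> red_fun" where
  "drift c = (\<lambda>r p l. p * Dr c r p l + 2 * l / r^3 * Dp c r p l)"

(* T acts on the pair (a,b) as mu/r^2 times the rotation (a,b) |-> (-2 L b, a).
   For mu = lam this says exactly that the bracket of the lift with H vanishes. *)
definition radial_eigen :: "real \<Rightarrow> red_fun \<times> red_fun \<Rightarrow> bool" where
  "radial_eigen \<mu> c \<longleftrightarrow> (\<forall>r p l. r > 0 \<longrightarrow>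
      drift (fst c) r p l = - (\<mu> / r^2) * (2 * l * snd c r p l)
    \<and> drift (snd c) r p l = \<mu> / r^2 * fst c r p l)"

lemma radial_eigen_unit: "radial_eigen 0 unit_pair"
  unfolding radial_eigen_def unit_pair_def drift_def Dr_def Dp_def by simp

(* T differentiates only in r and p_r, so factors depending on L pass through it. *)
lemma drift_scale:
  assumes "smooth_red c" "r > 0"
  shows "drift (\<lambda>r p l. g l * c r p l) r p l = g l * drift c r p l"
proof -
  have "Dr (\<lambda>r p l. g l * c r p l) r p l = g l * Dr c r p l"
    unfolding Dr_def by (rule DERIV_imp_deriv)
      (use smooth_redD(1)[OF assms] in \<open>auto intro!: derivative_eq_intros simp: Dr_def\<close>)
  moreover have "Dp (\<lambda>r p l. g l * c r p l) r p l = g l * Dp c r p l"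
    unfolding Dp_def by (rule DERIV_imp_deriv)
      (use smooth_redD(2)[OF assms] in \<open>auto intro!: derivative_eq_intros simp: Dp_def\<close>)
  ultimately show ?thesis unfolding drift_def by (simp add: algebra_simps)
qed

(* X_red commutes with T, hence preserves the eigenvalue. *)
lemma radial_eigen_X_red:
  assumes "smooth_pair c" "radial_eigen \<mu> c"
  shows "radial_eigen \<mu> (X_red lam c)"
  unfolding radial_eigen_def X_red_def fst_conv snd_conv
proof (intro allI impI)
  fix r p l :: real assume r: "r > 0"
  have a: "smooth_red (fst c)" and b: "smooth_red (snd c)" using assms(1) by (auto simp: smooth_pair_def)
  have "drift (fst c) r p l = - (\<mu> / r^2) * (2 * l * snd c r p l)" "drift (snd c) r p l = \<mu> / r^2 * fst c r p l"
    using assms(2) r by (auto simp: radial_eigen_def)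
  then show "drift (\<lambda>r p l. 2 * real lam * l * snd c r p l) r p l = - (\<mu> / r^2) * (2 * l * (- real lam * fst c r p l))
    \<and> drift (\<lambda>r p l. - real lam * fst c r p l) r p l = \<mu> / r^2 * (2 * real lam * l * snd c r p l)"
    using drift_scale[OF b r, of "\<lambda>l. 2 * real lam * l"] drift_scale[OF a r, of "\<lambda>_. - real lam"]
    by (simp add: algebra_simps)
qed

lemma drift_A_red:
  assumes "smooth_pair c" "r > 0"
  shows "drift (fst (A_red c)) r p l
           = p * drift (fst c) r p l + 2 * l / r * drift (snd c) r p l
             - 2 * l * p * snd c r p l / r^2 + 2 * l * fst c r p l / r^3"
    and "drift (snd (A_red c)) r p l
           = p * drift (snd c) r p l - drift (fst c) r p l / r
             + p * fst c r p l / r^2 + 2 * l * snd c r p l / r^3"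
proof -
  have a: "smooth_red (fst c)" and b: "smooth_red (snd c)" using assms(1) by (auto simp: smooth_pair_def)
  note da = smooth_redD[OF a assms(2)] and db = smooth_redD[OF b assms(2)]
  have dr1: "Dr (fst (A_red c)) r p l = p * Dr (fst c) r p l + 2 * l * (Dr (snd c) r p l * r - snd c r p l) / r^2"
    unfolding Dr_def A_red_def fst_conv by (rule DERIV_imp_deriv)
      (use assms(2) da(1) db(1) in \<open>auto intro!: derivative_eq_intros simp: power2_eq_square field_simps Dr_def\<close>)
  have dp1: "Dp (fst (A_red c)) r p l = fst c r p l + p * Dp (fst c) r p l + 2 * l * Dp (snd c) r p l / r"
    unfolding Dp_def A_red_def fst_conv by (rule DERIV_imp_deriv)
      (use assms(2) da(2) db(2) in \<open>auto intro!: derivative_eq_intros simp: field_simps Dp_def\<close>)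
  show "drift (fst (A_red c)) r p l
           = p * drift (fst c) r p l + 2 * l / r * drift (snd c) r p l
             - 2 * l * p * snd c r p l / r^2 + 2 * l * fst c r p l / r^3"
    unfolding drift_def dr1 dp1 using assms(2)
    by (simp add: field_simps power2_eq_square power3_eq_cube; simp add: algebra_simps)
  have dr2: "Dr (snd (A_red c)) r p l = p * Dr (snd c) r p l - (Dr (fst c) r p l * r - fst c r p l) / r^2"
    unfolding Dr_def A_red_def snd_conv by (rule DERIV_imp_deriv)
      (use assms(2) da(1) db(1) in \<open>auto intro!: derivative_eq_intros simp: power2_eq_square field_simps Dr_def\<close>)
  have dp2: "Dp (snd (A_red c)) r p l = snd c r p l + p * Dp (snd c) r p l - Dp (fst c) r p l / r"
    unfolding Dp_def A_red_def snd_conv by (rule DERIV_imp_deriv)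
      (use assms(2) da(2) db(2) in \<open>auto intro!: derivative_eq_intros simp: field_simps Dp_def\<close>)
  show "drift (snd (A_red c)) r p l
           = p * drift (snd c) r p l - drift (fst c) r p l / r
             + p * fst c r p l / r^2 + 2 * l * snd c r p l / r^3"
    unfolding drift_def dr2 dp2 using assms(2)
    by (simp add: field_simps power2_eq_square power3_eq_cube; simp add: algebra_simps)
qed

lemma radial_eigen_A_red:
  assumes "smooth_pair c" "radial_eigen \<mu> c"
  shows "radial_eigen (\<mu> + 1) (A_red c)"
  unfolding radial_eigen_def
proof (intro allI impI conjI)
  fix r p l :: real assume r: "r > 0"
  have ea: "drift (fst c) r p l = - (\<mu> / r^2) * (2 * l * snd c r p l)"
    and eb: "drift (snd c) r p l = \<mu> / r^2 * fst c r p l"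
    using assms(2) r by (auto simp: radial_eigen_def)
  show "drift (fst (A_red c)) r p l = - ((\<mu> + 1) / r^2) * (2 * l * snd (A_red c) r p l)"
    unfolding drift_A_red(1)[OF assms(1) r] unfolding ea eb A_red_def snd_conv
    using r by (simp add: field_simps power2_eq_square power3_eq_cube)
  show "drift (snd (A_red c)) r p l = (\<mu> + 1) / r^2 * fst (A_red c) r p l"
    unfolding drift_A_red(2)[OF assms(1) r] unfolding ea eb A_red_def fst_conv
    using r by (simp add: field_simps power2_eq_square power3_eq_cube)
qed

lemma A_red_power_unit:
  "smooth_pair ((A_red ^^ n) unit_pair) \<and> radial_eigen (real n) ((A_red ^^ n) unit_pair)"
proof (induction n)
  case 0 show ?case using smooth_pair_unit radial_eigen_unit by simp
next
  case (Suc n)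
  then have "radial_eigen (real n + 1) (A_red ((A_red ^^ n) unit_pair))"
    using radial_eigen_A_red by blast
  with Suc show ?case using smooth_pair_A_red by (simp add: add.commute)
qed

lemma X_red_power:
  assumes "smooth_pair c" "radial_eigen \<mu> c"
  shows "smooth_pair ((X_red lam ^^ n) c) \<and> radial_eigen \<mu> ((X_red lam ^^ n) c)"
  using assms by (induction n) (auto simp: smooth_pair_X_red radial_eigen_X_red)

(* From here on F = k / sin^2 theta is fixed; lam > 0 is needed to divide by lam r. *)
context
  fixes lam :: nat and k psi0 :: real and F :: "real \<Rightarrow> real"
  assumes lam_pos: "lam > 0" and F_def: "F = (\<lambda>psi. k / (sin (real lam * psi + psi0))^2)"
begin

abbreviation angle :: "real \<Rightarrow> real" where
  "angle psi \<equiv> real lam * psi + psi0"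

definition lift :: "red_fun \<times> red_fun \<Rightarrow> phase_fun" where
  "lift c = (\<lambda>r psi pr q. fst c r pr (q^2/2 + F psi) * cos (angle psi)
                         + snd c r pr (q^2/2 + F psi) * (q * sin (angle psi)))"

definition represents :: "phase_fun \<Rightarrow> red_fun \<times> red_fun \<Rightarrow> bool" where
  "represents f c \<longleftrightarrow> (\<forall>r psi pr q. r > 0 \<longrightarrow> sin (angle psi) \<noteq> 0 \<longrightarrow> f r psi pr q = lift c r psi pr q)"

lemma represents_unit: "represents (\<lambda>r psi pr q. cos (angle psi)) unit_pair"
  unfolding represents_def lift_def unit_pair_def by simp

(* F' sin theta = -2 lam F cos theta: the property of F that makes X_L close on lifts. *)
lemma F_derivative:
  assumes "sin (angle psi) \<noteq> 0"
  shows "(F has_real_derivative - 2 * real lam * F psi * cos (angle psi) / sin (angle psi)) (at psi)"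
  unfolding F_def using assms
  by (auto intro!: derivative_eq_intros simp: field_simps power2_eq_square power3_eq_cube)

(* The domain sin theta <> 0 is open, so representation passes to psi-derivatives. *)
lemma eventually_sin_angle_nonzero:
  assumes "sin (angle psi) \<noteq> 0"
  shows "eventually (\<lambda>t. sin (angle t) \<noteq> 0) (nhds psi)"
proof -
  have "open {t. sin (angle t) \<noteq> 0}"
    by (intro open_Collect_neq continuous_intros)
  with assms show ?thesis using eventually_nhds_in_open by fastforce
qed

lemma d_psi_lift:
  fixes q :: real
  assumes c: "smooth_pair c" and f: "represents f c" and r: "r > 0" and s: "sin (angle psi) \<noteq> 0"
  defines "l \<equiv> q^2/2 + F psi"
  shows "d_psi f r psi pr q =
     (DL (fst c) r pr l * cos (angle psi) + DL (snd c) r pr l * q * sin (angle psi)) * deriv F psi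
   + real lam * (snd c r pr l * q * cos (angle psi) - fst c r pr l * sin (angle psi))"
proof -
  have a: "smooth_red (fst c)" and b: "smooth_red (snd c)" using c by (auto simp: smooth_pair_def)
  have hL: "((\<lambda>t. q^2/2 + F t) has_real_derivative deriv F psi) (at psi)"
    using F_derivative[OF s] DERIV_imp_deriv by (fastforce intro!: derivative_eq_intros)
  define A where "A = (\<lambda>t. fst c r pr (q^2/2 + F t))"
  define B where "B = (\<lambda>t. snd c r pr (q^2/2 + F t))"
  have ha: "(A has_real_derivative DL (fst c) r pr l * deriv F psi) (at psi)"
    unfolding A_def l_def by (rule DERIV_chain2[OF smooth_redD(3)[OF a r] hL])
  have hb: "(B has_real_derivative DL (snd c) r pr l * deriv F psi) (at psi)"
    unfolding B_def l_def by (rule DERIV_chain2[OF smooth_redD(3)[OF b r] hL])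
  have A_at: "A psi = fst c r pr l" and B_at: "B psi = snd c r pr l"
    unfolding A_def B_def l_def by simp_all
  have "d_psi f r psi pr q = deriv (\<lambda>t. lift c r t pr q) psi"
    unfolding d_psi_def
    by (rule deriv_cong_ev[OF eventually_mono[OF eventually_sin_angle_nonzero[OF s]] refl])
      (use f r in \<open>auto simp: represents_def\<close>)
  also have "(\<lambda>t. lift c r t pr q) = (\<lambda>t. A t * cos (angle t) + B t * (q * sin (angle t)))"
    unfolding lift_def A_def B_def ..
  also have "deriv \<dots> psi = (DL (fst c) r pr l * cos (angle psi) + DL (snd c) r pr l * q * sin (angle psi)) * deriv F psi
   + real lam * (snd c r pr l * q * cos (angle psi) - fst c r pr l * sin (angle psi))"
    by (rule DERIV_imp_deriv) (auto intro!: derivative_eq_intros ha hb simp: A_at B_at algebra_simps)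
  finally show ?thesis .
qed

lemma d_ppsi_lift:
  fixes q :: real
  assumes c: "smooth_pair c" and f: "represents f c" and r: "r > 0" and s: "sin (angle psi) \<noteq> 0"
  defines "l \<equiv> q^2/2 + F psi"
  shows "d_ppsi f r psi pr q =
     (DL (fst c) r pr l * cos (angle psi) + DL (snd c) r pr l * q * sin (angle psi)) * q
   + snd c r pr l * sin (angle psi)"
proof -
  have a: "smooth_red (fst c)" and b: "smooth_red (snd c)" using c by (auto simp: smooth_pair_def)
  have hL: "((\<lambda>t. t^2/2 + F psi) has_real_derivative q) (at q)"
    by (auto intro!: derivative_eq_intros)
  define A where "A = (\<lambda>t. fst c r pr (t^2/2 + F psi))"
  define B where "B = (\<lambda>t. snd c r pr (t^2/2 + F psi))"
  have ha: "(A has_real_derivative DL (fst c) r pr l * q) (at q)"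
    unfolding A_def l_def by (rule DERIV_chain2[OF smooth_redD(3)[OF a r] hL])
  have hb: "(B has_real_derivative DL (snd c) r pr l * q) (at q)"
    unfolding B_def l_def by (rule DERIV_chain2[OF smooth_redD(3)[OF b r] hL])
  have A_at: "A q = fst c r pr l" and B_at: "B q = snd c r pr l"
    unfolding A_def B_def l_def by simp_all
  have "(\<lambda>t. f r psi pr t) = (\<lambda>t. lift c r psi pr t)"
    using f r s by (auto simp: represents_def)
  then have "d_ppsi f r psi pr q = deriv (\<lambda>t. lift c r psi pr t) q"
    unfolding d_ppsi_def by simp
  also have "(\<lambda>t. lift c r psi pr t) = (\<lambda>t. A t * cos (angle psi) + B t * (t * sin (angle psi)))"
    unfolding lift_def A_def B_def ..
  also have "deriv \<dots> q = (DL (fst c) r pr l * cos (angle psi) + DL (snd c) r pr l * q * sin (angle psi)) * q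
   + snd c r pr l * sin (angle psi)"
    by (rule DERIV_imp_deriv) (auto intro!: derivative_eq_intros ha hb simp: A_at B_at algebra_simps)
  finally show ?thesis .
qed

lemma d_r_lift:
  fixes q :: real
  assumes c: "smooth_pair c" and f: "represents f c" and r: "r > 0" and s: "sin (angle psi) \<noteq> 0"
  defines "l \<equiv> q^2/2 + F psi"
  shows "d_r f r psi pr q = Dr (fst c) r pr l * cos (angle psi) + Dr (snd c) r pr l * (q * sin (angle psi))"
proof -
  have a: "smooth_red (fst c)" and b: "smooth_red (snd c)" using c by (auto simp: smooth_pair_def)
  have near_r: "eventually (\<lambda>t. t > 0) (nhds r)"
    using r eventually_nhds_in_open[OF open_greaterThan[of 0]] by auto
  have "d_r f r psi pr q = deriv (\<lambda>t. lift c t psi pr q) r"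
    unfolding d_r_def
    by (rule deriv_cong_ev[OF eventually_mono[OF near_r] refl]) (use f s in \<open>auto simp: represents_def\<close>)
  also have "(\<lambda>t. lift c t psi pr q) = (\<lambda>t. fst c t pr l * cos (angle psi) + snd c t pr l * (q * sin (angle psi)))"
    unfolding lift_def l_def ..
  also have "deriv \<dots> r = Dr (fst c) r pr l * cos (angle psi) + Dr (snd c) r pr l * (q * sin (angle psi))"
    by (rule DERIV_imp_deriv) (auto intro!: derivative_eq_intros smooth_redD(1)[OF a r] smooth_redD(1)[OF b r])
  finally show ?thesis .
qed

lemma d_pr_lift:
  fixes q :: real
  assumes c: "smooth_pair c" and f: "represents f c" and r: "r > 0" and s: "sin (angle psi) \<noteq> 0"
  defines "l \<equiv> q^2/2 + F psi"
  shows "d_pr f r psi pr q = Dp (fst c) r pr l * cos (angle psi) + Dp (snd c) r pr l * (q * sin (angle psi))"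
proof -
  have a: "smooth_red (fst c)" and b: "smooth_red (snd c)" using c by (auto simp: smooth_pair_def)
  have "(\<lambda>t. f r psi t q) = (\<lambda>t. lift c r psi t q)"
    using f r s by (auto simp: represents_def)
  then have "d_pr f r psi pr q = deriv (\<lambda>t. lift c r psi t q) pr"
    unfolding d_pr_def by simp
  also have "(\<lambda>t. lift c r psi t q) = (\<lambda>t. fst c r t l * cos (angle psi) + snd c r t l * (q * sin (angle psi)))"
    unfolding lift_def l_def ..
  also have "deriv \<dots> pr = Dp (fst c) r pr l * cos (angle psi) + Dp (snd c) r pr l * (q * sin (angle psi))"
    by (rule DERIV_imp_deriv) (auto intro!: derivative_eq_intros smooth_redD(2)[OF a r] smooth_redD(2)[OF b r])
  finally show ?thesis .
qed

lemma XL_represents: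
  assumes c: "smooth_pair c" and f: "represents f c"
  shows "represents (XL F f) (X_red lam c)"
  unfolding represents_def
proof (intro allI impI)
  fix r psi pr q :: real assume r: "r > 0" and s: "sin (angle psi) \<noteq> 0"
  have dF: "deriv F psi = - 2 * real lam * F psi * cos (angle psi) / sin (angle psi)"
    by (rule DERIV_imp_deriv[OF F_derivative[OF s]])
  show "XL F f r psi pr q = lift (X_red lam c) r psi pr q"
    unfolding XL_def d_psi_lift[OF c f r s] d_ppsi_lift[OF c f r s] dF
    unfolding lift_def X_red_def fst_conv snd_conv
    using s by (simp add: field_simps power2_eq_square)
qed

lemma Aop_represents:
  assumes c: "smooth_pair c" and f: "represents f c"
  shows "represents (Aop lam F f) (A_red c)"
  unfolding represents_def
proof (intro allI impI)
  fix r psi pr q :: real assume r: "r > 0" and s: "sin (angle psi) \<noteq> 0"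
  have X: "XL F f r psi pr q = lift (X_red lam c) r psi pr q" and f_at: "f r psi pr q = lift c r psi pr q"
    using XL_represents[OF c f] f r s by (auto simp: represents_def)
  show "Aop lam F f r psi pr q = lift (A_red c) r psi pr q"
    unfolding Aop_def X f_at unfolding lift_def X_red_def A_red_def fst_conv snd_conv
    using r lam_pos by (simp add: field_simps)
qed

lemma poisson_Ham:
  assumes r: "r > 0" and s: "sin (angle psi) \<noteq> 0"
  shows "poisson f (Ham F) r psi pr q
     = pr * d_r f r psi pr q + 2 * (q^2/2 + F psi) / r^3 * d_pr f r psi pr q + XL F f r psi pr q / r^2"
proof -
  have hF: "(F has_real_derivative deriv F psi) (at psi)"
    using F_derivative[OF s] DERIV_imp_deriv by metis
  have H_r: "d_r (Ham F) r psi pr q = - 2 * (q^2/2 + F psi) / r^3"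
    unfolding d_r_def Ham_def by (rule DERIV_imp_deriv)
      (use r in \<open>auto intro!: derivative_eq_intros simp: field_simps power2_eq_square power3_eq_cube\<close>)
  have H_pr: "d_pr (Ham F) r psi pr q = pr"
    unfolding d_pr_def Ham_def by (rule DERIV_imp_deriv) (auto intro!: derivative_eq_intros)
  have H_psi: "d_psi (Ham F) r psi pr q = deriv F psi / r^2"
    unfolding d_psi_def Ham_def by (rule DERIV_imp_deriv)
      (use r in \<open>auto intro!: derivative_eq_intros hF simp: field_simps\<close>)
  have H_ppsi: "d_ppsi (Ham F) r psi pr q = q / r^2"
    unfolding d_ppsi_def Ham_def by (rule DERIV_imp_deriv)
      (use r in \<open>auto intro!: derivative_eq_intros simp: field_simps\<close>)
  show ?thesis
    unfolding poisson_def XL_def H_r H_pr H_psi H_ppsi by (simp add: diff_divide_distrib add_divide_distrib algebra_simps)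
qed

lemma poisson_Ham_vanishes:
  assumes c: "smooth_pair c" and f: "represents f c" and eig: "radial_eigen (real lam) c"
    and r: "r > 0" and s: "sin (angle psi) \<noteq> 0"
  shows "poisson f (Ham F) r psi pr q = 0"
proof -
  define l where "l = q^2/2 + F psi"
  have X: "XL F f r psi pr q = lift (X_red lam c) r psi pr q"
    using XL_represents[OF c f] r s by (simp add: represents_def)
  have ea: "drift (fst c) r pr l = - (real lam / r^2) * (2 * l * snd c r pr l)"
    and eb: "drift (snd c) r pr l = real lam / r^2 * fst c r pr l"
    using eig r by (auto simp: radial_eigen_def)
  have "poisson f (Ham F) r psi pr q
      = cos (angle psi) * (drift (fst c) r pr l + 2 * real lam * l / r^2 * snd c r pr l)
      + q * sin (angle psi) * (drift (snd c) r pr l - real lam / r^2 * fst c r pr l)"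
    unfolding poisson_Ham[OF r s] X d_r_lift[OF c f r s] d_pr_lift[OF c f r s] l_def[symmetric]
    unfolding lift_def X_red_def drift_def fst_conv snd_conv l_def[symmetric]
    by (simp add: algebra_simps diff_divide_distrib add_divide_distrib)
  then show ?thesis using ea eb by simp
qed

lemma Aop_power_represents:
  assumes "smooth_pair c" "represents f c"
  shows "represents ((Aop lam F ^^ n) f) ((A_red ^^ n) c)"
proof (induction n)
  case 0 show ?case using assms(2) by simp
next
  case (Suc n)
  have "smooth_pair ((A_red ^^ n) c)"
    using assms(1) by (induction n) (auto simp: smooth_pair_A_red)
  with Suc show ?case using Aop_represents by simp
qed

lemma XL_power_represents:
  assumes "smooth_pair c" "represents f c"
  shows "represents ((XL F ^^ n) f) ((X_red lam ^^ n) c)"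
proof (induction n)
  case 0 show ?case using assms(2) by simp
next
  case (Suc n)
  have "smooth_pair ((X_red lam ^^ n) c)"
    using assms(1) by (induction n) (auto simp: smooth_pair_X_red)
  with Suc show ?case using XL_represents by simp
qed

end

theorem mainTheorem4:
  fixes lam :: nat and k psi0 :: real and nu :: nat
    and F G :: "real \<Rightarrow> real"
  assumes "lam > 0"
    and "F = (\<lambda>psi. k / (sin (real lam * psi + psi0))^2)"
    and "G = (\<lambda>psi. cos (real lam * psi + psi0))"
  shows "\<forall>r psi pr ppsi. r > 0 \<longrightarrow> sin (real lam * psi + psi0) \<noteq> 0 \<longrightarrow>
    poisson (((XL F) ^^ nu) (((Aop lam F) ^^ lam) (\<lambda>r psi pr ppsi. G psi))) (Ham F)
      r psi pr ppsi = 0"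
proof -
  define c where "c = (X_red lam ^^ nu) ((A_red ^^ lam) unit_pair)"
  have "smooth_pair ((A_red ^^ lam) unit_pair)" and "radial_eigen (real lam) ((A_red ^^ lam) unit_pair)"
    using A_red_power_unit by blast+
  then have c_smooth: "smooth_pair c" and c_eigen: "radial_eigen (real lam) c"
    unfolding c_def using X_red_power by blast+
  have "represents lam psi0 F ((Aop lam F ^^ lam) (\<lambda>r psi pr ppsi. G psi)) ((A_red ^^ lam) unit_pair)"
    using Aop_power_represents[OF assms(1,2) smooth_pair_unit] represents_unit[OF assms(1,2)]
    by (simp add: assms(3) unit_pair_def)
  then have "represents lam psi0 F ((XL F ^^ nu) ((Aop lam F ^^ lam) (\<lambda>r psi pr ppsi. G psi))) c"
    unfolding c_def using XL_power_represents[OF assms(1,2)] A_red_power_unit by blast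
  then show ?thesis
    using poisson_Ham_vanishes[OF assms(1,2) c_smooth _ c_eigen] by blast
qed

end
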